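(* Let $S_1,S_2\subseteq\mathbb N$ be numerical semigroups, $S=S_1\times S_2\subseteq\mathbb N^2$, and $\boldsymbol\omega=(w_1,w_2)\in S$ with $w_1,w_2>0$. Write $\mathrm{Ap}(S_1,w_1)=\{u_1<u_2<\dots<u_{w_1}\}$ and $\mathrm{Ap}(S_2,w_2)=\{v_1<\dots<v_{w_2}\}$, and set formally $u_{w_1+1}=v_{w_2+1}=\infty$. Then the levels of $\mathrm{Ap}(S,\boldsymbol\omega)=S\setminus(\boldsymbol\omega+S)$ are $A_1,\dots,A_{w_1+w_2}$, where $A_1=\{(0,0)\}$ and, for $2\le k\le w_1+w_2$, $$A_k=\bigcup_{\substack{1\le i\le w_1,\ 1\le j\le w_2\\ i+j=k}}\Big(\{(u_i,b): b\in S_2,\ v_j<b\le v_{j+1}\}\cup\{(a,v_j): a\in S_1,\ u_i<a\le u_{i+1}\}\Big).$$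
   Context: For a numerical semigroup $T$ and $w\in T$, $\mathrm{Ap}(T,w)=T\setminus(w+T)$, a set with $w$ elements. $S=S_1\times S_2$ is a (non-local) good semigroup and $\boldsymbol\omega+S$ is a good ideal of it. Notation: $\le$ componentwise on $\mathbb Z^2$, $\boldsymbol\alpha\ll\boldsymbol\beta$ means both coordinates strictly smaller, $\boldsymbol\alpha\le\le\boldsymbol\beta$ means $\boldsymbol\alpha=\boldsymbol\beta$ or $\boldsymbol\alpha\ll\boldsymbol\beta$, $\wedge$ componentwise minimum, $\Delta^S_i(\boldsymbol\alpha)=\{\boldsymbol\beta\in S:\beta_i=\alpha_i,\ \beta_j>\alpha_j\ (j\neq i)\}$. Levels of $A=\mathrm{Ap}(S,\boldsymbol\omega)$: $\boldsymbol\alpha\in B$ is a complete infimum of $\boldsymbol\beta^{(1)},\boldsymbol\beta^{(2)}\in B$ if, up to order, $\boldsymbol\beta^{(1)}\in\Delta^S_1(\boldsymbol\alpha)$ and $\boldsymbol\beta^{(2)}\in\Delta^S_2(\boldsymbol\alpha)$. $B^{(1)}$ = maximal elements of $A$ for $\le\le$, $C^{(1)}$ = those that are complete infima of two elements of $B^{(1)}$, $D^{(1)}=B^{(1)}\setminus C^{(1)}$; inductively $B^{(i)}$ = maximal elements for $\le\le$ of $A\setminus\bigcup_{j<i}D^{(j)}$, $C^{(i)},D^{(i)}$ likewise; $A=\bigsqcup_{i=1}^ND^{(i)}$ and the levels are $A_i=D^{(N+1-i)}$. *)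

theory Defs
  imports Main
begin

definition numerical_semigroup :: "nat set \<Rightarrow> bool" where
  "numerical_semigroup T \<longleftrightarrow> 0 \<in> T \<and> (\<forall>a\<in>T. \<forall>b\<in>T. a + b \<in> T) \<and> finite (UNIV - T)"

definition apery :: "nat set \<Rightarrow> nat \<Rightarrow> nat set" where
  "apery T w = T - (\<lambda>t. w + t) ` T"

definition apery2 :: "(nat \<times> nat) set \<Rightarrow> nat \<times> nat \<Rightarrow> (nat \<times> nat) set" where
  "apery2 S \<omega> = S - (\<lambda>t. (fst \<omega> + fst t, snd \<omega> + snd t)) ` S"

definition sll :: "nat \<times> nat \<Rightarrow> nat \<times> nat \<Rightarrow> bool" where
  "sll \<alpha> \<beta> \<longleftrightarrow> fst \<alpha> < fst \<beta> \<and> snd \<alpha> < snd \<beta>"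

definition slle :: "nat \<times> nat \<Rightarrow> nat \<times> nat \<Rightarrow> bool" where
  "slle \<alpha> \<beta> \<longleftrightarrow> \<alpha> = \<beta> \<or> sll \<alpha> \<beta>"

definition maxel :: "(nat \<times> nat) set \<Rightarrow> (nat \<times> nat) set" where
  "maxel X = {x \<in> X. \<forall>y\<in>X. slle x y \<longrightarrow> y = x}"

definition Delta1 :: "(nat \<times> nat) set \<Rightarrow> nat \<times> nat \<Rightarrow> (nat \<times> nat) set" where
  "Delta1 S \<alpha> = {\<beta> \<in> S. fst \<beta> = fst \<alpha> \<and> snd \<beta> > snd \<alpha>}"

definition Delta2 :: "(nat \<times> nat) set \<Rightarrow> nat \<times> nat \<Rightarrow> (nat \<times> nat) set" where
  "Delta2 S \<alpha> = {\<beta> \<in> S. snd \<beta> = snd \<alpha> \<and> fst \<beta> > fst \<alpha>}"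

definition complete_inf :: "(nat \<times> nat) set \<Rightarrow> (nat \<times> nat) set \<Rightarrow> nat \<times> nat \<Rightarrow> bool" where
  "complete_inf S B \<alpha> \<longleftrightarrow> \<alpha> \<in> B \<and>
     (\<exists>\<beta>1\<in>B. \<exists>\<beta>2\<in>B. (\<beta>1 \<in> Delta1 S \<alpha> \<and> \<beta>2 \<in> Delta2 S \<alpha>) \<or> (\<beta>1 \<in> Delta2 S \<alpha> \<and> \<beta>2 \<in> Delta1 S \<alpha>))"

definition Cset :: "(nat \<times> nat) set \<Rightarrow> (nat \<times> nat) set \<Rightarrow> (nat \<times> nat) set" where
  "Cset S X = {\<alpha> \<in> maxel X. complete_inf S (maxel X) \<alpha>}"

definition Dset :: "(nat \<times> nat) set \<Rightarrow> (nat \<times> nat) set \<Rightarrow> (nat \<times> nat) set" where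
  "Dset S X = maxel X - Cset S X"

fun rem :: "(nat \<times> nat) set \<Rightarrow> (nat \<times> nat) set \<Rightarrow> nat \<Rightarrow> (nat \<times> nat) set" where
  "rem S A 0 = A"
| "rem S A (Suc n) = rem S A n - Dset S (rem S A n)"

text \<open>Dlev S A n is D^(n+1) in the paper's 1-based indexing.\<close>
definition Dlev :: "(nat \<times> nat) set \<Rightarrow> (nat \<times> nat) set \<Rightarrow> nat \<Rightarrow> (nat \<times> nat) set" where
  "Dlev S A n = Dset S (rem S A n)"

end

theory Submission
  imports Defs
begin

text \<open>Give each (a, b) of the Apery set the level
  level (a, b) = 1 + #{i. u i < a} + #{j. v j < b}.
  Since a is in Ap(S1, w1) or b is in Ap(S2, w2), the level strictly increases along << and
  never exceeds w1 + w2. In the sublevel set {level <= m} an element of level m is maximal and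
  is no complete infimum, because moving it along either coordinate past an Apery element raises
  the level. A maximal element of smaller level must be some (u i, v j) of level m - 1, and it
  is the complete infimum of (u i, next element of S2) and (next element of S1, v j), both of
  level m. So D of {level <= m} is {level = m}: the removal process strips the levels from the
  top, A_k = {level = k}, and reading off the level gives the stated description of A_k.\<close>

definition enum_rank :: "(nat \<Rightarrow> nat) \<Rightarrow> nat \<Rightarrow> nat \<Rightarrow> nat" where
  "enum_rank f n a = card {i \<in> {1..n}. f i < a}"

lemma enum_rank_mono: "a \<le> a' \<Longrightarrow> enum_rank f n a \<le> enum_rank f n a'"
  unfolding enum_rank_def by (rule card_mono) auto

lemma enum_rank_le: "enum_rank f n a \<le> n"
proof -
  have "card {i \<in> {1..n}. f i < a} \<le> card {1..n}" by (rule card_mono) auto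
  then show ?thesis by (simp add: enum_rank_def)
qed

context
  fixes f :: "nat \<Rightarrow> nat" and n :: nat
  assumes mono: "strict_mono_on {1..n} f"
begin

lemma indices_below_eq_segment: "{i \<in> {1..n}. f i < a} = {1..enum_rank f n a}"
proof (cases "{i \<in> {1..n}. f i < a} = {}")
  case True
  then show ?thesis by (simp add: enum_rank_def)
next
  case False
  let ?D = "{i \<in> {1..n}. f i < a}"
  define d where "d = Max ?D"
  have "d \<in> ?D" unfolding d_def using False by (intro Max_in) auto
  have "?D = {1..d}"
  proof (intro equalityI subsetI)
    fix i assume "i \<in> ?D"
    then show "i \<in> {1..d}" unfolding d_def by (simp add: Max_ge)
  next
    fix i assume "i \<in> {1..d}"
    then have "f i \<le> f d"
      using \<open>d \<in> ?D\<close> strict_mono_on_less_eq[OF mono] by auto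
    then show "i \<in> ?D" using \<open>i \<in> {1..d}\<close> \<open>d \<in> ?D\<close> by auto
  qed
  then show ?thesis by (simp add: enum_rank_def)
qed

lemma le_enum_rank_iff: "i \<in> {1..n} \<Longrightarrow> i \<le> enum_rank f n a \<longleftrightarrow> f i < a"
  using indices_below_eq_segment[of a] by (auto simp: set_eq_iff)

lemma enum_rank_eq_iff:
  assumes "i \<in> {1..n}"
  shows "enum_rank f n a = i \<longleftrightarrow> f i < a \<and> (i < n \<longrightarrow> a \<le> f (Suc i))"
  using assms le_enum_rank_iff[of i a] le_enum_rank_iff[of "Suc i" a] enum_rank_le[of f n a]
  by (cases "i < n") auto

lemma enum_rank_at:
  assumes i: "i \<in> {1..n}"
  shows "enum_rank f n (f i) = i - 1"
proof -
  have "\<not> i \<le> enum_rank f n (f i)" using le_enum_rank_iff[OF i] by simp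
  moreover have "i - 1 \<le> enum_rank f n (f i)"
  proof (cases "i = 1")
    case False
    then have "i - 1 \<in> {1..n}" using i by auto
    moreover have "f (i - 1) < f i" using strict_mono_onD[OF mono calculation i] i by simp
    ultimately show ?thesis using le_enum_rank_iff by blast
  qed simp
  ultimately show ?thesis by simp
qed

lemma enum_rank_image_less: "a \<in> f ` {1..n} \<Longrightarrow> enum_rank f n a < n"
  using enum_rank_at by auto

lemma enum_rank_less:
  assumes "a \<in> f ` {1..n}" "a < a'"
  shows "enum_rank f n a < enum_rank f n a'"
proof -
  obtain i where i: "i \<in> {1..n}" "a = f i" using assms(1) by blast
  then have "i \<le> enum_rank f n a'" using le_enum_rank_iff[OF i(1)] assms(2) by simp
  then show ?thesis using enum_rank_at[OF i(1)] i by auto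
qed

lemma enum_rank_gap:
  assumes "a < t" and gap: "\<And>z. a < z \<Longrightarrow> z < t \<Longrightarrow> z \<notin> f ` {1..n}"
  shows "enum_rank f n t = enum_rank f n a + (if a \<in> f ` {1..n} then 1 else 0)"
proof (cases "a \<in> f ` {1..n}")
  case True
  then obtain i where i: "i \<in> {1..n}" "a = f i" by blast
  have "i < n \<longrightarrow> t \<le> f (Suc i)"
  proof
    assume "i < n"
    then have "Suc i \<in> {1..n}" "f i < f (Suc i)" using i strict_mono_onD[OF mono] by auto
    moreover have "f (Suc i) \<in> f ` {1..n}" using calculation(1) by blast
    ultimately show "t \<le> f (Suc i)" using gap[of "f (Suc i)"] i by fastforce
  qed
  then have "enum_rank f n t = i" using enum_rank_eq_iff[OF i(1)] i assms(1) by simp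
  then show ?thesis using enum_rank_at[OF i(1)] i True by simp
next
  case False
  have "f j < t \<longleftrightarrow> f j < a" if "j \<in> {1..n}" for j
  proof -
    have "f j \<noteq> a" "f j \<in> f ` {1..n}" using False that by auto
    then show ?thesis using gap[of "f j"] assms(1) by (cases "f j < a") auto
  qed
  then have "{j \<in> {1..n}. f j < t} = {j \<in> {1..n}. f j < a}" by blast
  then show ?thesis using False by (simp add: enum_rank_def)
qed

lemma enum_rank_eq_0_iff: "1 \<le> n \<Longrightarrow> enum_rank f n a = 0 \<longleftrightarrow> a \<le> f 1"
  using le_enum_rank_iff[of 1 a] by auto

lemma enum_rank_above_all:
  assumes "\<And>i. i \<in> {1..n} \<Longrightarrow> f i \<le> a"
  shows "enum_rank f n a = n - (if a \<in> f ` {1..n} then 1 else 0)"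
proof (cases "a \<in> f ` {1..n}")
  case True
  then obtain i where i: "i \<in> {1..n}" "a = f i" by blast
  then have "n \<le> i" using assms[of n] strict_mono_on_less_eq[OF mono, of n i] by auto
  then show ?thesis using enum_rank_at[OF i(1)] i True by simp
next
  case False
  then have "f j < a" if "j \<in> {1..n}" for j using assms[OF that] that by (auto simp: le_less)
  then have "{j \<in> {1..n}. f j < a} = {1..n}" by blast
  then show ?thesis using False by (simp add: enum_rank_def)
qed

lemma first_eq_0_if_0_in_image: "0 \<in> f ` {1..n} \<Longrightarrow> f 1 = 0"
proof -
  assume "0 \<in> f ` {1..n}"
  then obtain i where "i \<in> {1..n}" "f i = 0" by force
  then show "f 1 = 0" using strict_mono_on_less_eq[OF mono, of 1 i] by simp
qed

end

lemma numerical_semigroup_infinite: "numerical_semigroup T \<Longrightarrow> infinite T"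
  unfolding numerical_semigroup_def using Diff_infinite_finite[of "UNIV - T" UNIV]
  by (auto simp: Diff_Diff_Int)

lemma zero_in_apery: "0 \<in> T \<Longrightarrow> 0 < w \<Longrightarrow> 0 \<in> apery T w"
  unfolding apery_def by auto

lemma apery2_Times:
  "apery2 (S1 \<times> S2) (w1, w2) =
     {(a, b). a \<in> S1 \<and> b \<in> S2 \<and> (a \<in> apery S1 w1 \<or> b \<in> apery S2 w2)}"
  unfolding apery2_def apery_def by (auto simp: image_iff)

lemma obtain_next_above:
  fixes X T :: "nat set"
  assumes "infinite T" "X \<subseteq> T"
  obtains t where "t \<in> T" "a < t" "\<And>z. a < z \<Longrightarrow> z < t \<Longrightarrow> z \<notin> X"
    and "(\<exists>c\<in>X. a < c) \<Longrightarrow> t \<in> X"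
proof (cases "\<exists>c\<in>X. a < c")
  case True
  define t where "t = (LEAST z. z \<in> X \<and> a < z)"
  have "t \<in> X \<and> a < t" unfolding t_def using True by (metis (mono_tags, lifting) LeastI)
  moreover have "z \<notin> X" if "a < z" "z < t" for z
    using not_less_Least[of z "\<lambda>z. z \<in> X \<and> a < z"] that t_def by blast
  ultimately show ?thesis using that assms(2) by blast
next
  case False
  obtain t where "t \<in> T" "a < t"
    using assms(1) finite_nat_set_iff_bounded_le[of T] by (meson not_le)
  then show ?thesis using that False by blast
qed

lemma maxel_subset: "maxel X \<subseteq> X"
  unfolding maxel_def by blast

lemma not_sll_if_maxel: "x \<in> maxel X \<Longrightarrow> y \<in> X \<Longrightarrow> \<not> sll x y"
  unfolding maxel_def slle_def sll_def by auto

lemma level_set_subset_maxel: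
  fixes lev :: "nat \<times> nat \<Rightarrow> nat"
  assumes "\<And>x y. x \<in> A \<Longrightarrow> sll x y \<Longrightarrow> lev x < lev y"
  shows "{x \<in> A. lev x = m} \<subseteq> maxel {x \<in> A. lev x \<le> m}"
proof
  fix x assume x: "x \<in> {x \<in> A. lev x = m}"
  have "y = x" if "y \<in> A" "lev y \<le> m" "slle x y" for y
    using that x assms[of x y] by (auto simp: slle_def)
  then show "x \<in> maxel {x \<in> A. lev x \<le> m}" using x by (simp add: maxel_def)
qed

lemma rem_eq_sublevel_set:
  fixes lev :: "nat \<times> nat \<Rightarrow> nat"
  assumes bound: "\<And>x. x \<in> A \<Longrightarrow> lev x \<le> N"
    and Dset_eq: "\<And>m. 1 \<le> m \<Longrightarrow> m \<le> N \<Longrightarrow> Dset S {x \<in> A. lev x \<le> m} = {x \<in> A. lev x = m}"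
  shows "n \<le> N \<Longrightarrow> rem S A n = {x \<in> A. lev x \<le> N - n}"
proof (induction n)
  case 0
  then show ?case using bound by auto
next
  case (Suc n)
  then have "rem S A (Suc n) = {x \<in> A. lev x \<le> N - n} - {x \<in> A. lev x = N - n}"
    using Dset_eq[of "N - n"] by simp
  also have "\<dots> = {x \<in> A. lev x \<le> N - Suc n}" using Suc.prems by auto
  finally show ?case .
qed

lemma Dlev_eq_level_set:
  fixes lev :: "nat \<times> nat \<Rightarrow> nat"
  assumes bound: "\<And>x. x \<in> A \<Longrightarrow> lev x \<le> N"
    and Dset_eq: "\<And>m. 1 \<le> m \<Longrightarrow> m \<le> N \<Longrightarrow> Dset S {x \<in> A. lev x \<le> m} = {x \<in> A. lev x = m}"
    and k: "1 \<le> k" "k \<le> N"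
  shows "Dlev S A (N - k) = {x \<in> A. lev x = k}"
  using rem_eq_sublevel_set[OF bound Dset_eq, of "N - k"] Dset_eq[OF k] k
  by (simp add: Dlev_def)

locale apery_product =
  fixes S1 S2 :: "nat set" and w1 w2 :: nat and u v :: "nat \<Rightarrow> nat"
  assumes ns1: "numerical_semigroup S1" and ns2: "numerical_semigroup S2"
    and pos1: "0 < w1" and pos2: "0 < w2"
    and mono1: "strict_mono_on {1..w1} u" and enum1: "u ` {1..w1} = apery S1 w1"
    and mono2: "strict_mono_on {1..w2} v" and enum2: "v ` {1..w2} = apery S2 w2"
begin

abbreviation "U \<equiv> u ` {1..w1}"
abbreviation "V \<equiv> v ` {1..w2}"
abbreviation "A \<equiv> apery2 (S1 \<times> S2) (w1, w2)"

definition level :: "nat \<times> nat \<Rightarrow> nat" where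
  "level x = 1 + enum_rank u w1 (fst x) + enum_rank v w2 (snd x)"

lemma U_subset: "U \<subseteq> S1" and V_subset: "V \<subseteq> S2"
  using enum1 enum2 by (auto simp: apery_def)

lemma zero_in_U: "0 \<in> U" and zero_in_V: "0 \<in> V"
  using ns1 ns2 zero_in_apery pos1 pos2 enum1 enum2 by (auto simp: numerical_semigroup_def)

lemma rank_u_eq_0_iff: "enum_rank u w1 a = 0 \<longleftrightarrow> a = 0"
  using enum_rank_eq_0_iff[OF mono1] first_eq_0_if_0_in_image[OF mono1 zero_in_U] pos1 by simp

lemma rank_v_eq_0_iff: "enum_rank v w2 b = 0 \<longleftrightarrow> b = 0"
  using enum_rank_eq_0_iff[OF mono2] first_eq_0_if_0_in_image[OF mono2 zero_in_V] pos2 by simp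

lemma mem_A_iff: "(a, b) \<in> A \<longleftrightarrow> a \<in> S1 \<and> b \<in> S2 \<and> (a \<in> U \<or> b \<in> V)"
  unfolding apery2_Times enum1 enum2 by simp

lemma level_less:
  assumes "x \<in> A" "sll x y"
  shows "level x < level y"
proof -
  obtain a b where x: "x = (a, b)" by fastforce
  then have lt: "a < fst y" "b < snd y" using assms(2) by (auto simp: sll_def)
  have "a \<in> U \<or> b \<in> V" using assms(1) x mem_A_iff by simp
  then have "enum_rank u w1 a < enum_rank u w1 (fst y) \<or> enum_rank v w2 b < enum_rank v w2 (snd y)"
    using lt enum_rank_less[OF mono1, of a] enum_rank_less[OF mono2, of b] by blast
  moreover have "enum_rank u w1 a \<le> enum_rank u w1 (fst y)" "enum_rank v w2 b \<le> enum_rank v w2 (snd y)"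
    using lt by (simp_all add: enum_rank_mono)
  ultimately show ?thesis by (auto simp: level_def x)
qed

lemma level_le:
  assumes "x \<in> A"
  shows "level x \<le> w1 + w2"
proof -
  obtain a b where x: "x = (a, b)" by fastforce
  have "a \<in> U \<or> b \<in> V" using assms x mem_A_iff by simp
  then have "enum_rank u w1 a < w1 \<or> enum_rank v w2 b < w2"
    using enum_rank_image_less[OF mono1, of a] enum_rank_image_less[OF mono2, of b] by blast
  then show ?thesis using enum_rank_le[of u w1 a] enum_rank_le[of v w2 b] by (auto simp: level_def x)
qed

lemma level_Delta:
  assumes "x \<in> A" "\<beta> \<in> Delta1 (S1 \<times> S2) x" "\<gamma> \<in> Delta2 (S1 \<times> S2) x"
  shows "level x < level \<beta> \<or> level x < level \<gamma>"
proof -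
  obtain a b where x: "x = (a, b)" by fastforce
  have "a \<in> U \<or> b \<in> V" using assms(1) x mem_A_iff by simp
  moreover have "fst \<beta> = a" "b < snd \<beta>" "snd \<gamma> = b" "a < fst \<gamma>"
    using assms(2,3) x by (auto simp: Delta1_def Delta2_def)
  ultimately show ?thesis
    using enum_rank_less[OF mono1, of a "fst \<gamma>"] enum_rank_less[OF mono2, of b "snd \<beta>"]
    by (auto simp: level_def x)
qed

lemma exists_sll_successor:
  assumes "(a, b) \<in> A" "(\<exists>c\<in>U. a < c) \<or> (\<exists>c\<in>V. b < c)"
  shows "\<exists>y\<in>A. sll (a, b) y \<and>
    level y = level (a, b) + (if a \<in> U then 1 else 0) + (if b \<in> V then 1 else 0)"
proof -
  obtain t1 where t1: "t1 \<in> S1" "a < t1" "\<And>z. a < z \<Longrightarrow> z < t1 \<Longrightarrow> z \<notin> U"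
    "(\<exists>c\<in>U. a < c) \<Longrightarrow> t1 \<in> U"
    using obtain_next_above[OF numerical_semigroup_infinite[OF ns1] U_subset, where a = a] by blast
  obtain t2 where t2: "t2 \<in> S2" "b < t2" "\<And>z. b < z \<Longrightarrow> z < t2 \<Longrightarrow> z \<notin> V"
    "(\<exists>c\<in>V. b < c) \<Longrightarrow> t2 \<in> V"
    using obtain_next_above[OF numerical_semigroup_infinite[OF ns2] V_subset, where a = b] by blast
  have "t1 \<in> U \<or> t2 \<in> V" using assms(2) t1(4) t2(4) by blast
  then have "(t1, t2) \<in> A" using t1(1) t2(1) by (simp add: mem_A_iff)
  moreover have "sll (a, b) (t1, t2)" using t1 t2 by (simp add: sll_def)
  moreover have "level (t1, t2) = level (a, b) + (if a \<in> U then 1 else 0) + (if b \<in> V then 1 else 0)"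
    using enum_rank_gap[OF mono1 t1(2,3)] enum_rank_gap[OF mono2 t2(2,3)] by (simp add: level_def)
  ultimately show ?thesis by blast
qed

lemma level_set_maximal: "{x \<in> A. level x = m} \<subseteq> maxel {x \<in> A. level x \<le> m}"
  by (rule level_set_subset_maxel) (rule level_less)

lemma maximal_below_level:
  assumes xm: "(a, b) \<in> maxel {x \<in> A. level x \<le> m}"
    and lt: "level (a, b) < m" and m: "m \<le> w1 + w2"
  shows "a \<in> U \<and> b \<in> V \<and> m = level (a, b) + 1"
proof -
  have x: "(a, b) \<in> A" using xm maxel_subset by blast
  have above: "m < level y" if "y \<in> A" "sll (a, b) y" for y
  proof -
    have "y \<notin> {x \<in> A. level x \<le> m}" using not_sll_if_maxel[OF xm] that(2) by blast
    then show ?thesis using that(1) by simp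
  qed
  show ?thesis
  proof (cases "(\<exists>c\<in>U. a < c) \<or> (\<exists>c\<in>V. b < c)")
    case True
    then obtain y where "y \<in> A" "sll (a, b) y"
      "level y = level (a, b) + (if a \<in> U then 1 else 0) + (if b \<in> V then 1 else 0)"
      using exists_sll_successor[OF x] by blast
    then show ?thesis using above[of y] lt by (auto split: if_splits)
  next
    case False
    then have "enum_rank u w1 a = w1 - (if a \<in> U then 1 else 0)"
      and "enum_rank v w2 b = w2 - (if b \<in> V then 1 else 0)"
      using enum_rank_above_all[OF mono1, of a] enum_rank_above_all[OF mono2, of b]
      by (auto simp: not_less)
    moreover have "a \<in> U \<or> b \<in> V" using x by (simp add: mem_A_iff)
    ultimately show ?thesis using lt m pos1 pos2 by (auto simp: level_def split: if_splits)
  qed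
qed

lemma complete_inf_if_maximal_below_level:
  assumes xm: "x \<in> maxel {x \<in> A. level x \<le> m}" and "level x < m" "m \<le> w1 + w2"
  shows "complete_inf (S1 \<times> S2) (maxel {x \<in> A. level x \<le> m}) x"
proof -
  obtain a b where x: "x = (a, b)" by fastforce
  have ab: "a \<in> U" "b \<in> V" "m = level (a, b) + 1"
    using maximal_below_level[of a b m] assms unfolding x by auto
  then have "a \<in> S1" "b \<in> S2" using U_subset V_subset by auto
  obtain t1 where t1: "t1 \<in> S1" "a < t1" "\<And>z. a < z \<Longrightarrow> z < t1 \<Longrightarrow> z \<notin> U"
    by (rule obtain_next_above[OF numerical_semigroup_infinite[OF ns1] U_subset, where a = a]) blast
  obtain t2 where t2: "t2 \<in> S2" "b < t2" "\<And>z. b < z \<Longrightarrow> z < t2 \<Longrightarrow> z \<notin> V"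
    by (rule obtain_next_above[OF numerical_semigroup_infinite[OF ns2] V_subset, where a = b]) blast
  have "enum_rank u w1 t1 = enum_rank u w1 a + 1"
    using enum_rank_gap[OF mono1 t1(2,3)] ab(1) by simp
  then have "(t1, b) \<in> {y \<in> A. level y = m}"
    using ab t1(1) \<open>b \<in> S2\<close> by (simp add: level_def mem_A_iff)
  moreover have "enum_rank v w2 t2 = enum_rank v w2 b + 1"
    using enum_rank_gap[OF mono2 t2(2,3)] ab(2) by simp
  then have "(a, t2) \<in> {y \<in> A. level y = m}"
    using ab t2(1) \<open>a \<in> S1\<close> by (simp add: level_def mem_A_iff)
  ultimately have "(a, t2) \<in> maxel {x \<in> A. level x \<le> m}" "(t1, b) \<in> maxel {x \<in> A. level x \<le> m}"
    using level_set_maximal[of m] by blast+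
  moreover have "(a, t2) \<in> Delta1 (S1 \<times> S2) x" "(t1, b) \<in> Delta2 (S1 \<times> S2) x"
    using \<open>a \<in> S1\<close> \<open>b \<in> S2\<close> t1(1,2) t2(1,2) x by (simp_all add: Delta1_def Delta2_def)
  ultimately show ?thesis using xm unfolding complete_inf_def by blast
qed

lemma Dset_sublevel_set:
  assumes "m \<le> w1 + w2"
  shows "Dset (S1 \<times> S2) {x \<in> A. level x \<le> m} = {x \<in> A. level x = m}"
proof (intro equalityI subsetI)
  let ?M = "maxel {x \<in> A. level x \<le> m}"
  fix x assume "x \<in> Dset (S1 \<times> S2) {x \<in> A. level x \<le> m}"
  then have x: "x \<in> ?M" "\<not> complete_inf (S1 \<times> S2) ?M x" by (simp_all add: Dset_def Cset_def)
  then have "x \<in> A" "level x \<le> m" using maxel_subset by blast+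
  moreover have "\<not> level x < m" using complete_inf_if_maximal_below_level[OF x(1) _ assms] x(2) by blast
  ultimately show "x \<in> {x \<in> A. level x = m}" by simp
next
  let ?M = "maxel {x \<in> A. level x \<le> m}"
  fix x assume x: "x \<in> {x \<in> A. level x = m}"
  then have "x \<in> ?M" by (rule subsetD[OF level_set_maximal])
  moreover have "\<not> complete_inf (S1 \<times> S2) ?M x"
  proof
    assume "complete_inf (S1 \<times> S2) ?M x"
    then obtain \<beta> \<gamma> where "\<beta> \<in> ?M" "\<gamma> \<in> ?M" "\<beta> \<in> Delta1 (S1 \<times> S2) x" "\<gamma> \<in> Delta2 (S1 \<times> S2) x"
      unfolding complete_inf_def by blast
    then have "level \<beta> \<le> m" "level \<gamma> \<le> m" using maxel_subset by blast+
    then show False using level_Delta[of x \<beta> \<gamma>] x \<open>\<beta> \<in> Delta1 _ x\<close> \<open>\<gamma> \<in> Delta2 _ x\<close> by auto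
  qed
  ultimately show "x \<in> Dset (S1 \<times> S2) {x \<in> A. level x \<le> m}" by (simp add: Dset_def Cset_def)
qed

lemma zero_in_A: "(0, 0) \<in> A"
proof -
  have "0 \<in> S1" "0 \<in> S2" using ns1 ns2 by (simp_all add: numerical_semigroup_def)
  then show ?thesis using zero_in_U by (simp add: mem_A_iff)
qed

lemma level_eq_1_iff: "level x = 1 \<longleftrightarrow> x = (0, 0)"
proof -
  have "level x = 1 \<longleftrightarrow> enum_rank u w1 (fst x) = 0 \<and> enum_rank v w2 (snd x) = 0"
    by (simp add: level_def)
  then show ?thesis unfolding rank_u_eq_0_iff rank_v_eq_0_iff by (simp add: prod_eq_iff)
qed

definition apery_level :: "nat \<Rightarrow> (nat \<times> nat) set" where
  "apery_level k = (\<Union>i \<in> {1..w1}. \<Union>j \<in> {1..w2}. if i + j = k then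
     {(u i, b) | b. b \<in> S2 \<and> v j < b \<and> (j < w2 \<longrightarrow> b \<le> v (j + 1))}
     \<union> {(a, v j) | a. a \<in> S1 \<and> u i < a \<and> (i < w1 \<longrightarrow> a \<le> u (i + 1))}
   else {})"

lemma mem_apery_level_iff:
  "(a, b) \<in> apery_level k \<longleftrightarrow> (\<exists>i\<in>{1..w1}. \<exists>j\<in>{1..w2}. i + j = k \<and>
     (a = u i \<and> b \<in> S2 \<and> enum_rank v w2 b = j \<or> b = v j \<and> a \<in> S1 \<and> enum_rank u w1 a = i))"
proof -
  have u_rank: "enum_rank u w1 a = i \<longleftrightarrow> u i < a \<and> (i < w1 \<longrightarrow> a \<le> u (i + 1))"
    if "i \<in> {1..w1}" for i
    using enum_rank_eq_iff[OF mono1 that] by simp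
  have v_rank: "enum_rank v w2 b = j \<longleftrightarrow> v j < b \<and> (j < w2 \<longrightarrow> b \<le> v (j + 1))"
    if "j \<in> {1..w2}" for j
    using enum_rank_eq_iff[OF mono2 that] by simp
  show ?thesis unfolding apery_level_def using u_rank v_rank by auto
qed

lemma apery_coordinate_cases:
  assumes "a \<in> U \<or> b \<in> V"
  shows "a \<in> U \<and> enum_rank v w2 b \<noteq> 0 \<or> b \<in> V \<and> enum_rank u w1 a \<noteq> 0
    \<or> enum_rank u w1 a = 0 \<and> enum_rank v w2 b = 0"
proof (cases "a \<in> U \<and> b \<in> V")
  case False
  then have "a \<notin> U \<and> b \<in> V \<or> a \<in> U \<and> b \<notin> V" using assms by blast
  then show ?thesis using zero_in_U zero_in_V rank_u_eq_0_iff[of a] rank_v_eq_0_iff[of b] by metis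
qed auto

lemma level_set_eq_apery_level:
  assumes k: "2 \<le> k"
  shows "{x \<in> A. level x = k} = apery_level k"
proof (intro set_eqI)
  fix x :: "nat \<times> nat"
  obtain a b where x: "x = (a, b)" by fastforce
  show "x \<in> {x \<in> A. level x = k} \<longleftrightarrow> x \<in> apery_level k"
  proof
    assume "x \<in> {x \<in> A. level x = k}"
    then have ab: "a \<in> S1" "b \<in> S2" "a \<in> U \<or> b \<in> V"
      and lv: "1 + enum_rank u w1 a + enum_rank v w2 b = k"
      by (simp_all add: x mem_A_iff level_def)
    have "a \<in> U \<and> enum_rank v w2 b \<noteq> 0 \<or> b \<in> V \<and> enum_rank u w1 a \<noteq> 0"
      using apery_coordinate_cases[OF ab(3)] lv k by auto
    then show "x \<in> apery_level k"
    proof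
      assume asm: "a \<in> U \<and> enum_rank v w2 b \<noteq> 0"
      then obtain i where i: "i \<in> {1..w1}" "a = u i" by blast
      have "enum_rank v w2 b \<in> {1..w2}" using asm enum_rank_le[of v w2 b] by simp
      moreover have "i + enum_rank v w2 b = k" using lv enum_rank_at[OF mono1 i(1)] i by simp
      ultimately show ?thesis unfolding x mem_apery_level_iff using i ab(2) by force
    next
      assume asm: "b \<in> V \<and> enum_rank u w1 a \<noteq> 0"
      then obtain j where j: "j \<in> {1..w2}" "b = v j" by blast
      have "enum_rank u w1 a \<in> {1..w1}" using asm enum_rank_le[of u w1 a] by simp
      moreover have "enum_rank u w1 a + j = k" using lv enum_rank_at[OF mono2 j(1)] j by simp
      ultimately show ?thesis unfolding x mem_apery_level_iff using j ab(1) by force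
    qed
  next
    assume "x \<in> apery_level k"
    then obtain i j where ij: "i \<in> {1..w1}" "j \<in> {1..w2}" "i + j = k"
      and "a = u i \<and> b \<in> S2 \<and> enum_rank v w2 b = j \<or> b = v j \<and> a \<in> S1 \<and> enum_rank u w1 a = i"
      unfolding x mem_apery_level_iff by blast
    then show "x \<in> {x \<in> A. level x = k}"
      using enum_rank_at[OF mono1 ij(1)] enum_rank_at[OF mono2 ij(2)] U_subset V_subset
      by (auto simp: x mem_A_iff level_def)
  qed
qed

end

theorem corollary4p5:
  fixes S1 S2 :: "nat set" and w1 w2 :: nat and u v :: "nat \<Rightarrow> nat"
  assumes "numerical_semigroup S1" and "numerical_semigroup S2"
    and "w1 \<in> S1" and "w2 \<in> S2" and "w1 > 0" and "w2 > 0"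
    and "strict_mono_on {1..w1} u" and "u ` {1..w1} = apery S1 w1"
    and "strict_mono_on {1..w2} v" and "v ` {1..w2} = apery S2 w2"
  shows "rem (S1 \<times> S2) (apery2 (S1 \<times> S2) (w1, w2)) (w1 + w2) = {}
    \<and> (\<forall>n < w1 + w2. rem (S1 \<times> S2) (apery2 (S1 \<times> S2) (w1, w2)) n \<noteq> {})
    \<and> Dlev (S1 \<times> S2) (apery2 (S1 \<times> S2) (w1, w2)) (w1 + w2 - 1) = {(0, 0)}
    \<and> (\<forall>k \<in> {2..w1 + w2}.
         Dlev (S1 \<times> S2) (apery2 (S1 \<times> S2) (w1, w2)) (w1 + w2 - k) =
         (\<Union>i \<in> {1..w1}. \<Union>j \<in> {1..w2}. if i + j = k then
            {(u i, b) | b. b \<in> S2 \<and> v j < b \<and> (j < w2 \<longrightarrow> b \<le> v (j + 1))}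
            \<union> {(a, v j) | a. a \<in> S1 \<and> u i < a \<and> (i < w1 \<longrightarrow> a \<le> u (i + 1))}
          else {}))"
proof -
  interpret apery_product S1 S2 w1 w2 u v
    using assms by unfold_locales auto
  have rem: "rem (S1 \<times> S2) A n = {x \<in> A. level x \<le> w1 + w2 - n}" if "n \<le> w1 + w2" for n
    using rem_eq_sublevel_set[OF level_le Dset_sublevel_set that] .
  have Dlev: "Dlev (S1 \<times> S2) A (w1 + w2 - k) = {x \<in> A. level x = k}" if "1 \<le> k" "k \<le> w1 + w2" for k
    using Dlev_eq_level_set[OF level_le Dset_sublevel_set that] .
  have "level (0, 0) = 1" using level_eq_1_iff by blast
  show ?thesis
  proof (fold apery_level_def, intro conjI allI impI ballI)
    show "rem (S1 \<times> S2) A (w1 + w2) = {}" using rem[of "w1 + w2"] by (simp add: level_def)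
    show "rem (S1 \<times> S2) A n \<noteq> {}" if "n < w1 + w2" for n
    proof -
      have "(0, 0) \<in> rem (S1 \<times> S2) A n" using rem[of n] that zero_in_A \<open>level (0, 0) = 1\<close> by simp
      then show ?thesis by blast
    qed
    show "Dlev (S1 \<times> S2) A (w1 + w2 - 1) = {(0, 0)}"
      using Dlev[of 1] pos1 zero_in_A level_eq_1_iff by auto
    show "Dlev (S1 \<times> S2) A (w1 + w2 - k) = apery_level k" if "k \<in> {2..w1 + w2}" for k
      using Dlev[of k] level_set_eq_apery_level[of k] that by simp
  qed
qed

end
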